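(* For every tree $T\subseteq\mathbb{N}^{<\mathbb{N}}$, $[\mathcal{JT}^\omega(T)]=\{\mathcal{J}^\omega(Z):Z\in[T]\}$, where $\mathcal{JT}^\omega(T)=\{J^\omega(\sigma):\sigma\in T\}$.
   Context: A tree is a subset of $\mathbb{N}^{<\mathbb{N}}$ closed under initial segments; $[T]$ is its set of infinite paths. Strings are coded by natural numbers via a fixed computable coding with $\sigma\subsetneq\tau$ implying code$(\sigma)<$ code$(\tau)$. For $\sigma$ finite or infinite, $\{e\}^\sigma_t(n)\downarrow$ means the $e$-th machine on input $n$ with oracle $\sigma$ halts in fewer than $\min(|\sigma|,t)$ steps. For $Z\in\mathbb{N}^\mathbb{N}$: $t_{-1}=1$, $t_n=\max\{t_{n-1}+1,\mu t(\{n\}^Z_t(n)\downarrow)\}$ ($t_n=t_{n-1}+1$ if no such $t$), $\mathcal{J}(Z)(n)=Z\restriction t_n$, and $\mathcal{J}^\omega(Z)(n)=\mathcal{J}^{n+1}(Z)(0)$. For finite $\sigma$: $t_{-1}=1$, $t_n=\max\{t_{n-1}+1,\mu t(\{n\}^{\sigma\restriction t}(n)\downarrow)\}$ ($t_n=t_{n-1}+1$ if no such $t$), $J(\sigma)=\langle\sigma\restriction t_0,\dots,\sigma\restriction t_{k-1}\rangle$ with $k$ least such that $t_k>|\sigma|$; $J^m$ is the $m$-fold iterate; $J^\omega(\sigma)=\langle J(\sigma)(0),J^2(\sigma)(0),\dots,J^{n-1}(\sigma)(0)\rangle$ where $n$ is least with $J^n(\sigma)=\emptyset$. *)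

theory Defs
  imports "HOL-Library.Sublist"
begin

text \<open>The machine model is a parameter M: M e f n = Some s means that the e-th
  oracle machine with oracle f on input n halts after exactly s steps
  (None: it does not halt).\<close>

type_synonym model = "nat \<Rightarrow> (nat \<Rightarrow> nat) \<Rightarrow> nat \<Rightarrow> nat option"

definition use_principle :: "model \<Rightarrow> bool" where
  "use_principle M \<longleftrightarrow>
     (\<forall>e f g n s. M e f n = Some s \<longrightarrow> (\<forall>i<s. f i = g i) \<longrightarrow> M e g n = Some s)"

definition good_coding :: "(nat list \<Rightarrow> nat) \<Rightarrow> bool" where
  "good_coding c \<longleftrightarrow> inj c \<and> (\<forall>\<sigma> \<tau>. strict_prefix \<sigma> \<tau> \<longrightarrow> c \<sigma> < c \<tau>)"

definition restr :: "(nat \<Rightarrow> nat) \<Rightarrow> nat \<Rightarrow> nat list" where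
  "restr Z k = map Z [0..<k]"

definition ext :: "nat list \<Rightarrow> nat \<Rightarrow> nat" where
  "ext \<sigma> i = (if i < length \<sigma> then \<sigma> ! i else 0)"

definition is_tree :: "nat list set \<Rightarrow> bool" where
  "is_tree T \<longleftrightarrow> (\<forall>\<sigma>\<in>T. \<forall>\<tau>. prefix \<tau> \<sigma> \<longrightarrow> \<tau> \<in> T)"

definition paths :: "nat list set \<Rightarrow> (nat \<Rightarrow> nat) set" where
  "paths T = {Z. \<forall>k. restr Z k \<in> T}"

text \<open>{e}^Z_t(n) halts (infinite oracle): halts in fewer than t steps.\<close>
definition haltsZ :: "model \<Rightarrow> nat \<Rightarrow> (nat \<Rightarrow> nat) \<Rightarrow> nat \<Rightarrow> nat \<Rightarrow> bool" where
  "haltsZ M e Z t n \<longleftrightarrow> (\<exists>s<t. M e Z n = Some s)"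

text \<open>{e}^sigma(n) halts (finite oracle, no step subscript): halts in fewer than |sigma| steps.\<close>
definition haltsF :: "model \<Rightarrow> nat \<Rightarrow> nat list \<Rightarrow> nat \<Rightarrow> bool" where
  "haltsF M e \<sigma> n \<longleftrightarrow> (\<exists>s<length \<sigma>. M e (ext \<sigma>) n = Some s)"

text \<open>The sequence t_n for infinite Z (t_{-1} = 1).\<close>
definition nextZ :: "model \<Rightarrow> (nat \<Rightarrow> nat) \<Rightarrow> nat \<Rightarrow> nat \<Rightarrow> nat" where
  "nextZ M Z n p = (if \<exists>t. haltsZ M n Z t n
                    then max (Suc p) (LEAST t. haltsZ M n Z t n) else Suc p)"

primrec tZ :: "model \<Rightarrow> (nat \<Rightarrow> nat) \<Rightarrow> nat \<Rightarrow> nat" where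
  "tZ M Z 0 = nextZ M Z 0 1"
| "tZ M Z (Suc m) = nextZ M Z (Suc m) (tZ M Z m)"

definition JJ :: "(nat list \<Rightarrow> nat) \<Rightarrow> model \<Rightarrow> (nat \<Rightarrow> nat) \<Rightarrow> nat \<Rightarrow> nat" where
  "JJ c M Z n = c (restr Z (tZ M Z n))"

definition JJomega :: "(nat list \<Rightarrow> nat) \<Rightarrow> model \<Rightarrow> (nat \<Rightarrow> nat) \<Rightarrow> nat \<Rightarrow> nat" where
  "JJomega c M Z n = ((JJ c M) ^^ (Suc n)) Z 0"

text \<open>The sequence t_n for finite sigma (t_{-1} = 1).\<close>
definition nextF :: "model \<Rightarrow> nat list \<Rightarrow> nat \<Rightarrow> nat \<Rightarrow> nat" where
  "nextF M \<sigma> n p = (if \<exists>t. haltsF M n (take t \<sigma>) n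
                    then max (Suc p) (LEAST t. haltsF M n (take t \<sigma>) n) else Suc p)"

primrec tF :: "model \<Rightarrow> nat list \<Rightarrow> nat \<Rightarrow> nat" where
  "tF M \<sigma> 0 = nextF M \<sigma> 0 1"
| "tF M \<sigma> (Suc m) = nextF M \<sigma> (Suc m) (tF M \<sigma> m)"

definition Jf :: "(nat list \<Rightarrow> nat) \<Rightarrow> model \<Rightarrow> nat list \<Rightarrow> nat list" where
  "Jf c M \<sigma> = (let k = (LEAST k. tF M \<sigma> k > length \<sigma>)
               in map (\<lambda>i. c (take (tF M \<sigma> i) \<sigma>)) [0..<k])"

definition Jfomega :: "(nat list \<Rightarrow> nat) \<Rightarrow> model \<Rightarrow> nat list \<Rightarrow> nat list" where
  "Jfomega c M \<sigma> = (let n = (LEAST n. ((Jf c M) ^^ n) \<sigma> = [])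
                    in map (\<lambda>i. ((Jf c M) ^^ (Suc i)) \<sigma> ! 0) [0..<n - 1])"

definition JTomega :: "(nat list \<Rightarrow> nat) \<Rightarrow> model \<Rightarrow> nat list set \<Rightarrow> nat list set" where
  "JTomega c M T = Jfomega c M ` T"

end

theory Submission
  imports Defs
begin

text \<open>Both \<open>tZ\<close> and \<open>tF\<close> run the same recursion on halting times, and by the use principle
  a finite string that agrees with \<open>Z\<close> far enough sees the same halting times as \<open>Z\<close>.
  Hence \<open>Jf\<close> maps \<open>Z\<close> restricted to \<open>t\<^sub>n\<^sub>-\<^sub>1\<close> exactly onto the first \<open>n\<close>
  entries of \<open>JJ Z\<close>; iterating this, every \<open>JJomega Z\<close> with \<open>Z \<in> [T]\<close> is a path through
  \<open>JTomega T\<close>.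
  Conversely, if \<open>\<sigma>\<^sub>k \<in> T\<close> has \<open>Jfomega \<sigma>\<^sub>k = X\<restriction>(k+1)\<close>, then injectivity of the coding
  makes the \<open>j\<close>-th entry of \<open>Jf (Jf\<^sup>i \<sigma>\<^sub>k)\<close> determine a prefix of \<open>Jf\<^sup>i \<sigma>\<^sub>k\<close> of length
  \<open>j + 2\<close>; by induction on \<open>j\<close> the strings \<open>Jf\<^sup>i \<sigma>\<^sub>k\<close> converge, as \<open>k \<rightarrow> \<infinity>\<close>, to sequences
  \<open>B\<^sub>i = approx_limit i\<close> with \<open>B\<^sub>i\<^sub>+\<^sub>1 = JJ B\<^sub>i\<close>, \<open>B\<^sub>0 \<in> [T]\<close> and \<open>X = JJomega B\<^sub>0\<close>.\<close>

fun step_time :: "nat option \<Rightarrow> nat \<Rightarrow> nat" where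
  "step_time None p = Suc p"
| "step_time (Some s) p = max (Suc p) (Suc s)"

text \<open>The recursion shared by \<open>tZ\<close> and \<open>tF\<close>: \<open>h n\<close> is the halting time of
  machine \<open>n\<close> on input \<open>n\<close> (with the respective oracle), \<open>None\<close> if it diverges.\<close>

primrec tseq :: "(nat \<Rightarrow> nat option) \<Rightarrow> nat \<Rightarrow> nat" where
  "tseq h 0 = step_time (h 0) 1"
| "tseq h (Suc m) = step_time (h (Suc m)) (tseq h m)"

lemma step_time_ge: "Suc p \<le> step_time x p"
  by (cases x) auto

lemma strict_mono_tseq: "strict_mono (tseq h)"
  unfolding strict_mono_Suc_iff using step_time_ge by (simp add: Suc_le_eq)

lemma tseq_ge: "m + 2 \<le> tseq h m"
proof (induction m)
  case 0
  show ?case using step_time_ge[where x="h 0" and p=1] by simp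
next
  case (Suc m)
  then show ?case using strict_monoD[OF strict_mono_tseq[of h], of m "Suc m"] by simp
qed

lemma halting_time_less_tseq: "h j = Some s \<Longrightarrow> s < tseq h j"
  by (cases j) auto

lemma halting_time_less_if_tseq_le:
  assumes "tseq h m \<le> P" and "j \<le> m" and "h j = Some s"
  shows "s < P"
  using halting_time_less_tseq[where h=h and j=j and s=s] assms
    strict_mono_less_eq[OF strict_mono_tseq[of h], of j m]
  by linarith

lemma tseq_cong: "(\<And>j. j \<le> m \<Longrightarrow> h j = h' j) \<Longrightarrow> tseq h m = tseq h' m"
  by (induction m) auto

lemma tseq_eq_if_agree_below:
  assumes "\<And>j s. j \<le> m \<Longrightarrow> s < P \<Longrightarrow> h j = Some s \<longleftrightarrow> h' j = Some s"
    and "\<And>j s. j \<le> m \<Longrightarrow> h j = Some s \<Longrightarrow> s < P"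
    and "\<And>j s. j \<le> m \<Longrightarrow> h' j = Some s \<Longrightarrow> s < P"
  shows "tseq h m = tseq h' m"
proof (rule tseq_cong)
  fix j assume "j \<le> m"
  show "h j = h' j"
  proof (cases "h j")
    case None
    then show ?thesis using assms(1,3)[OF \<open>j \<le> m\<close>] by (metis option.exhaust)
  next
    case (Some s)
    then show ?thesis using assms(1,2)[OF \<open>j \<le> m\<close>] by metis
  qed
qed

lemma nextZ_eq_step_time: "nextZ M Z n p = step_time (M n Z n) p"
proof (cases "M n Z n")
  case None
  then show ?thesis by (simp add: nextZ_def haltsZ_def)
next
  case (Some s)
  then have "(LEAST t. haltsZ M n Z t n) = Suc s"
    by (intro Least_equality) (auto simp: haltsZ_def)
  with Some show ?thesis by (auto simp: nextZ_def haltsZ_def)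
qed

lemma tZ_eq_tseq: "tZ M Z m = tseq (\<lambda>n. M n Z n) m"
  by (induction m) (simp_all add: nextZ_eq_step_time)

lemma strict_mono_tZ: "strict_mono (tZ M Z)"
  using strict_mono_tseq tZ_eq_tseq unfolding strict_mono_def by metis

definition halt_fin :: "model \<Rightarrow> nat list \<Rightarrow> nat \<Rightarrow> nat option" where
  "halt_fin M \<sigma> n = (case M n (ext \<sigma>) n of
     Some s \<Rightarrow> if s < length \<sigma> then Some s else None
   | None \<Rightarrow> None)"

lemma halt_fin_Some_iff:
  "halt_fin M \<sigma> n = Some s \<longleftrightarrow> s < length \<sigma> \<and> M n (ext \<sigma>) n = Some s"
  by (auto simp: halt_fin_def split: option.splits)

lemma length_restr [simp]: "length (restr Z L) = L"
  by (simp add: restr_def)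

lemma nth_restr [simp]: "i < L \<Longrightarrow> restr Z L ! i = Z i"
  by (simp add: restr_def)

lemma length_ge_if_take_eq_restr: "take P \<sigma> = restr Z P \<Longrightarrow> P \<le> length \<sigma>"
  by (drule arg_cong[where f=length]) simp

lemma ext_eq_if_take_eq_restr:
  assumes "take P \<sigma> = restr Z P" and "i < P"
  shows "ext \<sigma> i = Z i"
proof -
  have "\<sigma> ! i = take P \<sigma> ! i" using assms(2) by simp
  then show ?thesis
    using assms length_ge_if_take_eq_restr[OF assms(1)] by (simp add: ext_def)
qed

lemma take_restr: "a \<le> b \<Longrightarrow> take a (restr Z b) = restr Z a"
  by (simp add: restr_def take_map)

context
  fixes c :: "nat list \<Rightarrow> nat" and M :: model
  assumes use: "use_principle M"
begin

lemma halts_eq_if_agree: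
  "M e f n = Some s \<Longrightarrow> (\<And>i. i < s \<Longrightarrow> f i = g i) \<Longrightarrow> M e g n = Some s"
  using use unfolding use_principle_def by blast

lemma haltsF_take_iff:
  "haltsF M n (take t \<sigma>) n \<longleftrightarrow> (\<exists>s<t. halt_fin M \<sigma> n = Some s)"
proof
  assume "haltsF M n (take t \<sigma>) n"
  then obtain s where s: "s < length (take t \<sigma>)" "M n (ext (take t \<sigma>)) n = Some s"
    by (auto simp: haltsF_def)
  from s(2) have "M n (ext \<sigma>) n = Some s"
    by (rule halts_eq_if_agree) (use s(1) in \<open>simp add: ext_def\<close>)
  with s(1) show "\<exists>s<t. halt_fin M \<sigma> n = Some s" by (auto simp: halt_fin_Some_iff)
next
  assume "\<exists>s<t. halt_fin M \<sigma> n = Some s"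
  then obtain s where s: "s < t" "s < length \<sigma>" "M n (ext \<sigma>) n = Some s"
    by (auto simp: halt_fin_Some_iff)
  from s(3) have "M n (ext (take t \<sigma>)) n = Some s"
    by (rule halts_eq_if_agree) (use s(1,2) in \<open>simp add: ext_def\<close>)
  with s show "haltsF M n (take t \<sigma>) n" by (auto simp: haltsF_def)
qed

lemma nextF_eq_step_time: "nextF M \<sigma> n p = step_time (halt_fin M \<sigma> n) p"
proof (cases "halt_fin M \<sigma> n")
  case None
  then show ?thesis by (simp add: nextF_def haltsF_take_iff)
next
  case (Some s)
  then have "(LEAST t. haltsF M n (take t \<sigma>) n) = Suc s"
    by (intro Least_equality) (auto simp: haltsF_take_iff)
  with Some show ?thesis by (auto simp: nextF_def haltsF_take_iff)
qed

lemma tF_eq_tseq: "tF M \<sigma> m = tseq (halt_fin M \<sigma>) m"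
  by (induction m) (simp_all add: nextF_eq_step_time)

lemma halt_fin_agree:
  assumes "take P \<sigma> = restr Z P" and "s < P"
  shows "halt_fin M \<sigma> j = Some s \<longleftrightarrow> M j Z j = Some s"
proof -
  have P: "P \<le> length \<sigma>" using assms(1) by (rule length_ge_if_take_eq_restr)
  have agree: "ext \<sigma> i = Z i" if "i < s" for i
    using ext_eq_if_take_eq_restr[OF assms(1)] that assms(2) by simp
  show ?thesis
    unfolding halt_fin_Some_iff
    using halts_eq_if_agree[of j "ext \<sigma>" j s Z] halts_eq_if_agree[of j Z j s "ext \<sigma>"] agree P assms(2)
    by auto
qed

lemma strict_mono_tF: "strict_mono (tF M \<sigma>)"
  using strict_mono_tseq tF_eq_tseq unfolding strict_mono_def by metis

lemma tF_ge: "m + 2 \<le> tF M \<sigma> m"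
  unfolding tF_eq_tseq by (rule tseq_ge)

lemma tF_eq_tZ_if_agree:
  assumes agree: "take P \<sigma> = restr Z P" and "tF M \<sigma> m \<le> P" and "tZ M Z m \<le> P"
  shows "tF M \<sigma> m = tZ M Z m"
  unfolding tF_eq_tseq tZ_eq_tseq
proof (rule tseq_eq_if_agree_below[where P=P])
  fix j s assume "s < P"
  then show "halt_fin M \<sigma> j = Some s \<longleftrightarrow> M j Z j = Some s" by (rule halt_fin_agree[OF agree])
next
  fix j s assume "j \<le> m" and "halt_fin M \<sigma> j = Some s"
  with assms(2) show "s < P"
    by (intro halting_time_less_if_tseq_le[where h="halt_fin M \<sigma>"]) (simp_all add: tF_eq_tseq)
next
  fix j s assume "j \<le> m" and "M j Z j = Some s"
  with assms(3) show "s < P"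
    by (intro halting_time_less_if_tseq_le[where h="\<lambda>n. M n Z n"]) (simp_all add: tZ_eq_tseq)
qed

lemma tF_restr_eq_tZ:
  assumes "tZ M Z m \<le> L"
  shows "tF M (restr Z L) m = tZ M Z m"
  unfolding tF_eq_tseq tZ_eq_tseq
proof (rule tseq_eq_if_agree_below[where P=L])
  fix j s assume "s < L"
  then show "halt_fin M (restr Z L) j = Some s \<longleftrightarrow> M j Z j = Some s"
    by (intro halt_fin_agree) simp_all
next
  fix j s assume "halt_fin M (restr Z L) j = Some s"
  then show "s < L" by (simp add: halt_fin_Some_iff)
next
  fix j s assume "j \<le> m" and "M j Z j = Some s"
  with assms show "s < L"
    by (intro halting_time_less_if_tseq_le[where h="\<lambda>n. M n Z n"]) (simp_all add: tZ_eq_tseq)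
qed

lemma length_Jf: "length (Jf c M \<sigma>) = (LEAST k. length \<sigma> < tF M \<sigma> k)"
  by (simp add: Jf_def Let_def)

lemma nth_Jf: "j < length (Jf c M \<sigma>) \<Longrightarrow> Jf c M \<sigma> ! j = c (take (tF M \<sigma> j) \<sigma>)"
  by (simp add: Jf_def Let_def)

lemma tF_le_length_if_less_length_Jf: "j < length (Jf c M \<sigma>) \<Longrightarrow> tF M \<sigma> j \<le> length \<sigma>"
  unfolding length_Jf by (meson not_less_Least not_le)

lemma length_Jf_eqI:
  assumes "\<And>j. j < n \<Longrightarrow> tF M \<sigma> j \<le> length \<sigma>" and "length \<sigma> < tF M \<sigma> n"
  shows "length (Jf c M \<sigma>) = n"
  unfolding length_Jf using assms by (intro Least_equality) (auto simp: not_less[symmetric])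

lemma length_Jf_le: "length (Jf c M \<sigma>) \<le> length \<sigma> - 1"
  unfolding length_Jf using tF_ge[of "length \<sigma> - 1" \<sigma>] by (intro Least_le) linarith

lemma length_funpow_Jf_le: "length ((Jf c M ^^ n) \<sigma>) \<le> length \<sigma> - n"
proof (induction n)
  case (Suc n)
  then show ?case using length_Jf_le[of "(Jf c M ^^ n) \<sigma>"] by simp
qed simp

lemma Jf_nth_inj:
  assumes "good_coding c"
    and "j < length (Jf c M a)" and "j < length (Jf c M b)" and "Jf c M a ! j = Jf c M b ! j"
  shows "tF M a j = tF M b j \<and> take (tF M a j) a = take (tF M b j) b"
proof -
  have "take (tF M a j) a = take (tF M b j) b"
    using assms nth_Jf injD unfolding good_coding_def by metis
  moreover have "length (take (tF M a j) a) = tF M a j" "length (take (tF M b j) b) = tF M b j"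
    using tF_le_length_if_less_length_Jf assms(2,3) by auto
  ultimately show ?thesis by metis
qed

text \<open>The \<open>j\<close>-th entry of \<open>Jf \<sigma>\<close> codes a prefix of \<open>\<sigma>\<close> of length \<open>tF M \<sigma> j \<ge> j + 2\<close>.\<close>

lemma Jf_nth_eq_imp_nth_eq:
  assumes "good_coding c"
    and "j < length (Jf c M a)" and "j < length (Jf c M b)" and "Jf c M a ! j = Jf c M b ! j"
  shows "Suc j < length a \<and> (\<forall>i\<le>Suc j. a ! i = b ! i)"
proof -
  define t where "t = tF M a j"
  have t: "take t a = take t b" and "Suc (Suc j) \<le> t"
    using Jf_nth_inj[OF assms] tF_ge[of j a] by (auto simp: t_def)
  moreover have "t \<le> length a"
    using tF_le_length_if_less_length_Jf[OF assms(2)] by (simp add: t_def)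
  moreover have "a ! i = b ! i" if "i < t" for i
    using nth_take[OF that, of a] nth_take[OF that, of b] t by simp
  ultimately show ?thesis by simp
qed

lemma Jf_nth_eq_JJ:
  assumes agree: "take P \<sigma> = restr Z P" and m: "m < length (Jf c M \<sigma>)"
    and "tF M \<sigma> m \<le> P" and "tZ M Z m \<le> P"
  shows "Jf c M \<sigma> ! m = JJ c M Z m"
proof -
  have t: "tF M \<sigma> m = tZ M Z m" using tF_eq_tZ_if_agree assms by blast
  have "take (tZ M Z m) \<sigma> = take (tZ M Z m) (take P \<sigma>)"
    using assms(4) by (simp add: min_def)
  also have "\<dots> = restr Z (tZ M Z m)" using agree assms(4) by (simp add: take_restr)
  finally show ?thesis using nth_Jf[OF m] t by (simp add: JJ_def)
qed

definition jump_use :: "(nat \<Rightarrow> nat) \<Rightarrow> nat \<Rightarrow> nat" where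
  "jump_use Z n = (case n of 0 \<Rightarrow> 0 | Suc m \<Rightarrow> tZ M Z m)"

lemma jump_use_ge: "n \<le> jump_use Z n"
proof (cases n)
  case (Suc m)
  then show ?thesis using tseq_ge[of m "\<lambda>n. M n Z n"] by (simp add: jump_use_def tZ_eq_tseq)
qed (simp add: jump_use_def)

lemma Jf_restr_jump_use: "Jf c M (restr Z (jump_use Z n)) = restr (JJ c M Z) n"
proof -
  define L where "L = jump_use Z n"
  have tZ_le: "tZ M Z j \<le> L" if "j < n" for j
    using that strict_mono_less_eq[OF strict_mono_tZ]
    by (auto simp: L_def jump_use_def split: nat.split)
  have "length (Jf c M (restr Z L)) = n"
  proof (rule length_Jf_eqI)
    fix j assume "j < n"
    then show "tF M (restr Z L) j \<le> length (restr Z L)"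
      using tZ_le tF_restr_eq_tZ by simp
  next
    show "length (restr Z L) < tF M (restr Z L) n"
    proof (cases n)
      case 0
      then show ?thesis using tF_ge[of 0 "restr Z L"] by (simp add: L_def jump_use_def del: tF.simps)
    next
      case (Suc m)
      then have "tF M (restr Z L) m = L"
        using tF_restr_eq_tZ tZ_le by (simp add: L_def jump_use_def)
      then show ?thesis
        using Suc strict_monoD[OF strict_mono_tF[of "restr Z L"], of m n] by simp
    qed
  qed
  moreover have "Jf c M (restr Z L) ! i = JJ c M Z i" if "i < n" for i
    using that calculation tZ_le tF_le_length_if_less_length_Jf[of i "restr Z L"]
    by (intro Jf_nth_eq_JJ[where P=L]) simp_all
  ultimately show ?thesis by (simp add: L_def nth_equalityI)
qed

primrec jump_use_iter :: "nat \<Rightarrow> (nat \<Rightarrow> nat) \<Rightarrow> nat \<Rightarrow> nat" where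
  "jump_use_iter 0 Z n = n"
| "jump_use_iter (Suc i) Z n = jump_use Z (jump_use_iter i (JJ c M Z) n)"

lemma jump_use_iter_ge: "n \<le> jump_use_iter i Z n"
  by (induction i arbitrary: Z) (auto intro: order_trans jump_use_ge)

lemma funpow_Jf_restr_jump_use_iter:
  "j \<le> i \<Longrightarrow> (Jf c M ^^ j) (restr Z (jump_use_iter i Z n))
     = restr ((JJ c M ^^ j) Z) (jump_use_iter (i - j) ((JJ c M ^^ j) Z) n)"
proof (induction j arbitrary: i Z)
  case (Suc j)
  then obtain i' where i: "i = Suc i'" and "j \<le> i'" by (cases i) auto
  then show ?case
    using Suc.IH[of i' "JJ c M Z"]
    by (simp add: funpow_Suc_right Jf_restr_jump_use del: funpow.simps)
qed simp

lemma funpow_Jf_eventually_Nil: "\<exists>N. (\<forall>j<N. (Jf c M ^^ j) \<sigma> \<noteq> []) \<and> (Jf c M ^^ N) \<sigma> = []"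
proof -
  have "(Jf c M ^^ length \<sigma>) \<sigma> = []" using length_funpow_Jf_le[of "length \<sigma>" \<sigma>] by simp
  then show ?thesis using exists_least_iff[of "\<lambda>N. (Jf c M ^^ N) \<sigma> = []"] by blast
qed

lemma Jfomega_eq:
  assumes "\<And>j. j < N \<Longrightarrow> (Jf c M ^^ j) \<sigma> \<noteq> []" and "(Jf c M ^^ N) \<sigma> = []"
  shows "Jfomega c M \<sigma> = map (\<lambda>i. (Jf c M ^^ Suc i) \<sigma> ! 0) [0..<N - 1]"
proof -
  have "(LEAST n. (Jf c M ^^ n) \<sigma> = []) = N"
    using assms by (intro Least_equality) (auto simp: not_less[symmetric])
  then show ?thesis by (simp add: Jfomega_def)
qed

lemma JJomega_mem_paths:
  assumes "Z \<in> paths T"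
  shows "JJomega c M Z \<in> paths (JTomega c M T)"
  unfolding paths_def
proof (intro CollectI allI)
  fix k
  define \<sigma> where "\<sigma> = restr Z (jump_use_iter k Z 1)"
  have iter: "(Jf c M ^^ j) \<sigma> = restr ((JJ c M ^^ j) Z) (jump_use_iter (k - j) ((JJ c M ^^ j) Z) 1)"
    if "j \<le> k" for j
    using funpow_Jf_restr_jump_use_iter[OF that] by (simp add: \<sigma>_def)
  have nonempty: "(Jf c M ^^ j) \<sigma> \<noteq> []" if "j < Suc k" for j
  proof -
    have "1 \<le> length ((Jf c M ^^ j) \<sigma>)" using iter[of j] that jump_use_iter_ge[of 1] by simp
    then show ?thesis by auto
  qed
  have "(Jf c M ^^ Suc k) \<sigma> = []"
    using iter[of k] length_Jf_le[of "(Jf c M ^^ k) \<sigma>"] by simp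
  then have "Jfomega c M \<sigma> = map (\<lambda>i. (Jf c M ^^ Suc i) \<sigma> ! 0) [0..<k]"
    using Jfomega_eq[OF nonempty] by simp
  also have "\<dots> = restr (JJomega c M Z) k"
  proof -
    have "(Jf c M ^^ Suc i) \<sigma> ! 0 = JJomega c M Z i" if "i < k" for i
      using iter[of "Suc i"] that jump_use_iter_ge[of 1 "k - Suc i" "(JJ c M ^^ Suc i) Z"]
      by (simp add: JJomega_def del: funpow.simps)
    then show ?thesis by (simp add: restr_def)
  qed
  finally have "restr (JJomega c M Z) k = Jfomega c M \<sigma>" ..
  moreover have "\<sigma> \<in> T" using assms by (simp add: \<sigma>_def paths_def)
  ultimately show "restr (JJomega c M Z) k \<in> JTomega c M T"
    unfolding JTomega_def by (rule image_eqI)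
qed

lemma Jfomega_eq_restrD:
  assumes "Jfomega c M \<sigma> = restr X (Suc k)"
  shows "\<forall>i\<le>Suc k. (Jf c M ^^ i) \<sigma> \<noteq> []" and "\<forall>i\<le>k. X i = (Jf c M ^^ Suc i) \<sigma> ! 0"
proof -
  obtain N where nonempty: "\<forall>j<N. (Jf c M ^^ j) \<sigma> \<noteq> []" and "(Jf c M ^^ N) \<sigma> = []"
    using funpow_Jf_eventually_Nil by blast
  then have eq: "Jfomega c M \<sigma> = map (\<lambda>i. (Jf c M ^^ Suc i) \<sigma> ! 0) [0..<N - 1]"
    by (intro Jfomega_eq) simp_all
  then have "N = Suc (Suc k)" using arg_cong[OF assms, of length] by simp
  with nonempty show "\<forall>i\<le>Suc k. (Jf c M ^^ i) \<sigma> \<noteq> []" by simp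
  show "\<forall>i\<le>k. X i = (Jf c M ^^ Suc i) \<sigma> ! 0"
  proof (intro allI impI)
    fix i assume "i \<le> k"
    then have "X i = Jfomega c M \<sigma> ! i" by (simp add: assms)
    also have "\<dots> = (Jf c M ^^ Suc i) \<sigma> ! 0"
      using eq \<open>N = Suc (Suc k)\<close> \<open>i \<le> k\<close> by (simp del: funpow.simps upt_Suc)
    finally show "X i = (Jf c M ^^ Suc i) \<sigma> ! 0" .
  qed
qed

context
  fixes s :: "nat \<Rightarrow> nat list" and X :: "nat \<Rightarrow> nat"
  assumes coding: "good_coding c" and approx: "\<And>k. Jfomega c M (s k) = restr X (Suc k)"
begin

abbreviation approx :: "nat \<Rightarrow> nat \<Rightarrow> nat list" where
  "approx i k \<equiv> (Jf c M ^^ i) (s k)"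

lemma Jf_approx [simp]: "Jf c M (approx i k) = approx (Suc i) k"
  by simp

declare funpow.simps(2) [simp del]

lemma approx_nonempty: "i \<le> Suc k \<Longrightarrow> approx i k \<noteq> []"
  using Jfomega_eq_restrD(1)[OF approx] by blast

lemma eq_nth_approx: "i \<le> k \<Longrightarrow> X i = approx (Suc i) k ! 0"
  using Jfomega_eq_restrD(2)[OF approx] by blast

lemma approx_stable:
  assumes "i + m \<le> k" and "i + m \<le> k'"
  shows "Suc m < length (approx i k) \<and> (\<forall>j\<le>Suc m. approx i k ! j = approx i k' ! j)"
  using assms
proof (induction m arbitrary: i k k')
  case 0
  then have "approx (Suc i) k \<noteq> []" "approx (Suc i) k' \<noteq> []"
    and "approx (Suc i) k ! 0 = approx (Suc i) k' ! 0"
    using approx_nonempty eq_nth_approx[of i k] eq_nth_approx[of i k'] by simp_all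
  then show ?case by (intro Jf_nth_eq_imp_nth_eq[OF coding]) simp_all
next
  case (Suc m)
  have "Suc m < length (approx (Suc i) k)"
    and "approx (Suc i) k ! Suc m = approx (Suc i) k' ! Suc m"
    using Suc.IH[of "Suc i" k k'] Suc.prems by simp_all
  moreover have "Suc m < length (approx (Suc i) k')"
    using Suc.IH[of "Suc i" k' k'] Suc.prems by simp
  ultimately show ?case by (intro Jf_nth_eq_imp_nth_eq[OF coding]) simp_all
qed

definition approx_limit :: "nat \<Rightarrow> nat \<Rightarrow> nat" where
  "approx_limit i j = approx i (i + j) ! j"

lemma nth_approx_eq_limit:
  assumes "i + j \<le> k"
  shows "j < length (approx i k) \<and> approx i k ! j = approx_limit i j"
  using approx_stable[OF assms, of "i + j"] by (simp add: approx_limit_def)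

lemma take_approx_eq_limit:
  assumes "i + n \<le> k"
  shows "take n (approx i k) = restr (approx_limit i) n"
proof (cases n)
  case (Suc m)
  then have "n \<le> length (approx i k)" using nth_approx_eq_limit[of i m k] assms by simp
  then show ?thesis using nth_approx_eq_limit[of i _ k] assms by (intro nth_equalityI) simp_all
qed (simp add: restr_def)

lemma approx_limit_Suc: "approx_limit (Suc i) = JJ c M (approx_limit i)"
proof
  fix m
  define k0 where "k0 = Suc i + m"
  have entry: "m < length (Jf c M (approx i k)) \<and> Jf c M (approx i k) ! m = approx_limit (Suc i) m"
    if "k0 \<le> k" for k
    using nth_approx_eq_limit[of "Suc i" m k] that by (simp add: k0_def)
  define \<tau> where "\<tau> = tF M (approx i k0) m"
  define P where "P = max \<tau> (tZ M (approx_limit i) m)"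
  define k where "k = k0 + P"
  have "tF M (approx i k) m = \<tau>"
    using Jf_nth_inj[OF coding] entry[of k] entry[of k0] by (simp add: k_def \<tau>_def)
  moreover have "take P (approx i k) = restr (approx_limit i) P"
    by (rule take_approx_eq_limit) (simp add: k_def k0_def)
  ultimately have "Jf c M (approx i k) ! m = JJ c M (approx_limit i) m"
    using entry[of k] by (intro Jf_nth_eq_JJ[where P=P]) (simp_all add: k_def P_def)
  then show "approx_limit (Suc i) m = JJ c M (approx_limit i) m"
    using entry[of k] by (simp add: k_def)
qed

lemma approx_limit_eq_funpow: "approx_limit i = (JJ c M ^^ i) (approx_limit 0)"
  by (induction i) (simp_all add: approx_limit_Suc funpow.simps(2))

lemma eq_JJomega_approx_limit: "X = JJomega c M (approx_limit 0)"
proof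
  fix i
  have "X i = approx (Suc i) (Suc i) ! 0" by (simp add: eq_nth_approx)
  also have "\<dots> = approx_limit (Suc i) 0"
    using nth_approx_eq_limit[of "Suc i" 0 "Suc i"] by simp
  finally show "X i = JJomega c M (approx_limit 0) i"
    by (simp add: JJomega_def approx_limit_eq_funpow[of "Suc i"])
qed

lemma approx_limit_mem_paths:
  assumes "is_tree T" and "\<And>k. s k \<in> T"
  shows "approx_limit 0 \<in> paths T"
  unfolding paths_def
proof (intro CollectI allI)
  fix L
  have "restr (approx_limit 0) L = take L (s L)"
    using take_approx_eq_limit[of 0 L L] by simp
  then show "restr (approx_limit 0) L \<in> T"
    using assms unfolding is_tree_def by (metis take_is_prefix)
qed

end

lemma paths_JTomega_subset:
  assumes "good_coding c" and "is_tree T"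
  shows "paths (JTomega c M T) \<subseteq> JJomega c M ` paths T"
proof
  fix X assume X: "X \<in> paths (JTomega c M T)"
  have "\<forall>k. \<exists>\<sigma>\<in>T. Jfomega c M \<sigma> = restr X (Suc k)"
  proof
    fix k
    have "restr X (Suc k) \<in> Jfomega c M ` T" using X by (simp add: paths_def JTomega_def)
    then show "\<exists>\<sigma>\<in>T. Jfomega c M \<sigma> = restr X (Suc k)" by (metis imageE)
  qed
  then obtain s where "\<And>k. s k \<in> T" and "\<And>k. Jfomega c M (s k) = restr X (Suc k)"
    by metis
  with assms show "X \<in> JJomega c M ` paths T"
    using eq_JJomega_approx_limit approx_limit_mem_paths by blast
qed

end

theorem lemma5p14:
  fixes c :: "nat list \<Rightarrow> nat" and M :: model and T :: "nat list set"
  assumes "good_coding c" and "use_principle M" and "is_tree T"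
  shows "paths (JTomega c M T) = JJomega c M ` paths T"
  using paths_JTomega_subset[OF assms(2,1,3)] JJomega_mem_paths[OF assms(2)] by blast

end
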